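(* Let $\mathcal{D}=(\Omega,\mathcal{B})$ be a supersimple $2$-$(n,4,\lambda)$ design. Fix $\infty\in\Omega$ and define $G:=\mathcal{L}_\infty(\mathcal{D})$. The following are equivalent: (i) $G$ is a group; (ii) $G=\mathcal{L}(\mathcal{D})=\langle[a,b]\mid a,b\in\Omega\rangle$; (iii) $\mathcal{L}(\mathcal{D})=\mathcal{L}_x(\mathcal{D})$ for all $x\in\Omega$. Furthermore, if one (and therefore all) of these conditions hold, then $G$ is transitive on $\Omega$ and $\operatorname{stab}_G(\infty)=\pi_\infty(\mathcal{D})$.
   Context: A $2$-$(n,4,\lambda)$ design $(\Omega,\mathcal{B})$: $n$ points, a multiset of $4$-subsets (lines), every $2$-subset in exactly $\lambda$ lines; supersimple: distinct lines meet in at most two points. For distinct $a,b$ with lines $\{a,b,a_i,b_i\}$ ($1\le i\le\lambda$) through them, $[a,b]:=(a,b)\prod_i(a_i,b_i)\in\operatorname{Sym}(\Omega)$; $[a,a]:=1$. Permutations act on the right, products composed left to right; move sequence $[a_0,\dots,a_k]:=[a_0,a_1][a_1,a_2]\cdots[a_{k-1},a_k]$. $\mathcal{L}(\mathcal{D})$ is the set of all move sequences; $\mathcal{L}_x(\mathcal{D})$ is the set of move sequences $[x,a_1,\dots,a_k]$ ($k\ge1$) starting at $x$; $\pi_\infty(\mathcal{D})$ is the set of move sequences starting and ending at $\infty$. *)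

theory Defs
  imports "HOL-Library.Multiset" "HOL-Combinatorics.Permutations"
begin

definition design_2_4 :: "nat \<Rightarrow> nat \<Rightarrow> 'a set \<Rightarrow> 'a set multiset \<Rightarrow> bool" where
  "design_2_4 n lam \<Omega> \<B> \<longleftrightarrow>
     finite \<Omega> \<and> card \<Omega> = n \<and>
     (\<forall>B \<in># \<B>. B \<subseteq> \<Omega> \<and> card B = 4) \<and>
     (\<forall>x\<in>\<Omega>. \<forall>y\<in>\<Omega>. x \<noteq> y \<longrightarrow> size (filter_mset (\<lambda>B. {x, y} \<subseteq> B) \<B>) = lam)"

definition supersimple :: "'a set multiset \<Rightarrow> bool" where
  "supersimple \<B> \<longleftrightarrow>
     (\<forall>B. count \<B> B \<le> 1) \<and>
     (\<forall>B1 \<in># \<B>. \<forall>B2 \<in># \<B>. B1 \<noteq> B2 \<longrightarrow> card (B1 \<inter> B2) \<le> 2)"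

text \<open>The move [a,b] = (a,b) * prod_i (a_i,b_i), where {a,b,a_i,b_i} are the lines through
 a and b; [a,a] = 1.  Since the transpositions are disjoint (supersimplicity), it is
 written out pointwise: a point x on a line {a,b,x,y} is sent to y, a and b are swapped,
 and all other points are fixed.\<close>
definition move :: "'a set multiset \<Rightarrow> 'a \<Rightarrow> 'a \<Rightarrow> 'a \<Rightarrow> 'a" where
  "move \<B> a b x =
     (if a = b then x
      else if x = a then b
      else if x = b then a
      else if (\<exists>B \<in># \<B>. {a, b, x} \<subseteq> B)
        then (THE y. \<exists>B \<in># \<B>. B = {a, b, x, y} \<and> y \<notin> {a, b, x})
      else x)"

text \<open>Move sequence [a0,...,ak] = [a0,a1][a1,a2]...[a(k-1),ak], permutations acting on the
 right and products composed left to right, so as functions x \<mapsto> [a1,a2]([a0,a1] x).\<close>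
fun move_seq :: "'a set multiset \<Rightarrow> 'a list \<Rightarrow> 'a \<Rightarrow> 'a" where
  "move_seq \<B> [] = id"
| "move_seq \<B> [a] = id"
| "move_seq \<B> (a # b # rest) = move_seq \<B> (b # rest) \<circ> move \<B> a b"

definition L_all :: "'a set \<Rightarrow> 'a set multiset \<Rightarrow> ('a \<Rightarrow> 'a) set" where
  "L_all \<Omega> \<B> = {move_seq \<B> xs | xs. xs \<noteq> [] \<and> set xs \<subseteq> \<Omega>}"

definition L_from :: "'a set \<Rightarrow> 'a set multiset \<Rightarrow> 'a \<Rightarrow> ('a \<Rightarrow> 'a) set" where
  "L_from \<Omega> \<B> x = {move_seq \<B> (x # xs) | xs. xs \<noteq> [] \<and> set xs \<subseteq> \<Omega>}"

definition pi_loops :: "'a set \<Rightarrow> 'a set multiset \<Rightarrow> 'a \<Rightarrow> ('a \<Rightarrow> 'a) set" where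
  "pi_loops \<Omega> \<B> x = {move_seq \<B> xs | xs. xs \<noteq> [] \<and> set xs \<subseteq> \<Omega> \<and> hd xs = x \<and> last xs = x}"

definition is_perm_group :: "'a set \<Rightarrow> ('a \<Rightarrow> 'a) set \<Rightarrow> bool" where
  "is_perm_group \<Omega> G \<longleftrightarrow>
     (\<forall>p\<in>G. p permutes \<Omega>) \<and> id \<in> G \<and>
     (\<forall>p\<in>G. \<forall>q\<in>G. p \<circ> q \<in> G) \<and> (\<forall>p\<in>G. inv p \<in> G)"

inductive_set gen_group :: "('a \<Rightarrow> 'a) set \<Rightarrow> ('a \<Rightarrow> 'a) set" for S where
  gen_id: "id \<in> gen_group S"
| gen_gen: "s \<in> S \<Longrightarrow> s \<in> gen_group S"
| gen_comp: "p \<in> gen_group S \<Longrightarrow> q \<in> gen_group S \<Longrightarrow> p \<circ> q \<in> gen_group S"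
| gen_inv: "p \<in> gen_group S \<Longrightarrow> inv p \<in> gen_group S"

definition transitive_on :: "'a set \<Rightarrow> ('a \<Rightarrow> 'a) set \<Rightarrow> bool" where
  "transitive_on \<Omega> G \<longleftrightarrow> (\<forall>x\<in>\<Omega>. \<forall>y\<in>\<Omega>. \<exists>g\<in>G. g x = y)"

definition stabilizer :: "('a \<Rightarrow> 'a) set \<Rightarrow> 'a \<Rightarrow> ('a \<Rightarrow> 'a) set" where
  "stabilizer G x = {g \<in> G. g x = x}"

end

theory Submission
  imports Defs
begin

text \<open>Two lines of a supersimple design share at most two points, so the fourth point
  of the line through \<open>a, b, x\<close> is unique and every move \<open>[a,b]\<close> is an involution
  permuting \<open>\<Omega>\<close>.  Hence a move sequence is inverted by reversing it, and two move
  sequences compose to one whenever the first ends where the second starts; so \<open>\<L>(\<D>)\<close> is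
  a group as soon as every element of it can be started at every point.  Conversely, if
  \<open>\<L>\<^sub>\<infinity>(\<D>)\<close> is a group it contains every move, since
  \<open>[a,b] = [\<infinity>,a][\<infinity>,a,b]\<close>, and is therefore the group generated by them; multiplying by
  \<open>[x,\<infinity>]\<close> then moves the starting point from \<open>\<infinity>\<close> to any \<open>x\<close>.  Transitivity
  comes from the moves \<open>[\<infinity>,x]\<close>, and the stabiliser statement from the fact that
  \<open>[a\<^sub>0,\<dots>,a\<^sub>k]\<close> maps \<open>a\<^sub>0\<close> to \<open>a\<^sub>k\<close>.\<close>

lemma move_self [simp]: "move \<B> a a = id"
  unfolding move_def by auto

lemma move_apply_first [simp]: "move \<B> a b a = b"
  unfolding move_def by simp

lemma move_apply_second [simp]: "move \<B> a b b = a"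
  unfolding move_def by simp

lemma move_commute: "move \<B> a b = move \<B> b a"
  unfolding move_def by (auto simp: insert_commute fun_eq_iff)

lemma move_seq_append:
  "xs \<noteq> [] \<Longrightarrow> move_seq \<B> (xs @ ys) = move_seq \<B> (last xs # ys) \<circ> move_seq \<B> xs"
  by (induction xs rule: induct_list012) auto

lemma move_seq_hd_last: "xs \<noteq> [] \<Longrightarrow> move_seq \<B> xs (hd xs) = last xs"
  by (induction xs rule: induct_list012) auto

lemma move_seq_in_L_all: "xs \<noteq> [] \<Longrightarrow> set xs \<subseteq> \<Omega> \<Longrightarrow> move_seq \<B> xs \<in> L_all \<Omega> \<B>"
  unfolding L_all_def by blast

lemma move_in_L_all: "a \<in> \<Omega> \<Longrightarrow> b \<in> \<Omega> \<Longrightarrow> move \<B> a b \<in> L_all \<Omega> \<B>"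
  using move_seq_in_L_all[of "[a, b]"] by simp

lemma move_seq_in_L_from:
  "xs \<noteq> [] \<Longrightarrow> set xs \<subseteq> \<Omega> \<Longrightarrow> move_seq \<B> (x # xs) \<in> L_from \<Omega> \<B> x"
  unfolding L_from_def by blast

lemma L_from_subset_L_all: "x \<in> \<Omega> \<Longrightarrow> L_from \<Omega> \<B> x \<subseteq> L_all \<Omega> \<B>"
  unfolding L_from_def L_all_def by fastforce

lemma L_from_comp_move:
  assumes "p \<in> L_from \<Omega> \<B> x" "y \<in> \<Omega>" "x \<in> \<Omega>"
  shows "p \<circ> move \<B> y x \<in> L_from \<Omega> \<B> y"
proof -
  obtain xs where "p = move_seq \<B> (x # xs)" "xs \<noteq> []" "set xs \<subseteq> \<Omega>"
    using assms(1) unfolding L_from_def by blast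
  then show ?thesis
    using move_seq_in_L_from[where xs = "x # xs" and x = y] assms(3) by simp
qed

lemma move_seq_in_gen_group:
  "set xs \<subseteq> \<Omega> \<Longrightarrow> move_seq \<B> xs \<in> gen_group {move \<B> a b | a b. a \<in> \<Omega> \<and> b \<in> \<Omega>}"
  by (induction xs rule: induct_list012) (auto intro: gen_group.intros)

lemma L_all_subset_gen_group:
  "L_all \<Omega> \<B> \<subseteq> gen_group {move \<B> a b | a b. a \<in> \<Omega> \<and> b \<in> \<Omega>}"
  unfolding L_all_def using move_seq_in_gen_group by blast

lemma gen_group_least:
  assumes "S \<subseteq> H" "id \<in> H" "\<And>p q. p \<in> H \<Longrightarrow> q \<in> H \<Longrightarrow> p \<circ> q \<in> H"
    and "\<And>p. p \<in> H \<Longrightarrow> inv p \<in> H"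
  shows "gen_group S \<subseteq> H"
proof
  show "p \<in> H" if "p \<in> gen_group S" for p
    using that by induction (use assms in blast)+
qed

lemma gen_group_subset_perm_group:
  "is_perm_group \<Omega> H \<Longrightarrow> S \<subseteq> H \<Longrightarrow> gen_group S \<subseteq> H"
  unfolding is_perm_group_def by (rule gen_group_least) auto

lemma is_perm_group_gen_group:
  assumes "\<And>s. s \<in> S \<Longrightarrow> s permutes \<Omega>"
  shows "is_perm_group \<Omega> (gen_group S)"
proof -
  have "p permutes \<Omega>" if "p \<in> gen_group S" for p
    using that by induction (blast intro: assms permutes_id permutes_compose permutes_inv)+
  then show ?thesis
    unfolding is_perm_group_def by (auto intro: gen_group.intros)
qed

lemma L_from_comp_L_all:
  assumes "p \<in> L_from \<Omega> \<B> (last xs)" "xs \<noteq> []" "set xs \<subseteq> \<Omega>"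
  shows "p \<circ> move_seq \<B> xs \<in> L_all \<Omega> \<B>"
proof -
  obtain ys where "p = move_seq \<B> (last xs # ys)" "ys \<noteq> []" "set ys \<subseteq> \<Omega>"
    using assms(1) unfolding L_from_def by blast
  then show ?thesis
    using move_seq_append[OF assms(2)] move_seq_in_L_all[of "xs @ ys"] assms(2,3) by simp
qed

lemma pi_loops_subset_L_from: "pi_loops \<Omega> \<B> x \<subseteq> L_from \<Omega> \<B> x"
proof
  fix p assume "p \<in> pi_loops \<Omega> \<B> x"
  then obtain xs where xs: "p = move_seq \<B> xs" "xs \<noteq> []" "set xs \<subseteq> \<Omega>" "hd xs = x"
    unfolding pi_loops_def by blast
  then obtain ys where "xs = x # ys"
    by (cases xs) auto
  with xs have p: "p = move_seq \<B> (x # ys)" "set ys \<subseteq> \<Omega>" "x \<in> \<Omega>"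
    by auto
  show "p \<in> L_from \<Omega> \<B> x"
  proof (cases "ys = []")
    case True
    \<comment> \<open>the trivial loop \<open>[x]\<close> equals \<open>[x,x]\<close>\<close>
    then show ?thesis
      using move_seq_in_L_from[where xs = "[x]" and x = x] p by simp
  qed (simp add: p move_seq_in_L_from)
qed

lemma stabilizer_L_from: "stabilizer (L_from \<Omega> \<B> x) x = pi_loops \<Omega> \<B> x"
proof
  show "stabilizer (L_from \<Omega> \<B> x) x \<subseteq> pi_loops \<Omega> \<B> x"
  proof
    fix p assume "p \<in> stabilizer (L_from \<Omega> \<B> x) x"
    then obtain xs where "p = move_seq \<B> (x # xs)" "xs \<noteq> []" "set xs \<subseteq> \<Omega>" "p x = x"
      unfolding stabilizer_def L_from_def by blast
    moreover then have "last xs = x"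
      using move_seq_hd_last[of "x # xs" \<B>] by simp
    ultimately show "p \<in> pi_loops \<Omega> \<B> x"
      unfolding pi_loops_def L_from_def
      by (intro CollectI exI[of _ "x # xs"]) (auto simp: last_in_set)
  qed
  show "pi_loops \<Omega> \<B> x \<subseteq> stabilizer (L_from \<Omega> \<B> x) x"
    using pi_loops_subset_L_from move_seq_hd_last
    unfolding stabilizer_def pi_loops_def by fastforce
qed

lemma transitive_on_L_from:
  assumes "is_perm_group \<Omega> (L_from \<Omega> \<B> x)" "x \<in> \<Omega>"
  shows "transitive_on \<Omega> (L_from \<Omega> \<B> x)"
  unfolding transitive_on_def
proof (intro ballI)
  fix a b assume "a \<in> \<Omega>" "b \<in> \<Omega>"
  then have moves: "move \<B> x a \<in> L_from \<Omega> \<B> x" "move \<B> x b \<in> L_from \<Omega> \<B> x"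
    using move_seq_in_L_from[of "[a]" \<Omega> \<B> x] move_seq_in_L_from[of "[b]" \<Omega> \<B> x] by auto
  then have "inv (move \<B> x a) a = x"
    using assms(1) unfolding is_perm_group_def by (metis inv_f_eq move_apply_first permutes_inj)
  then have "(move \<B> x b \<circ> inv (move \<B> x a)) a = b"
    by simp
  moreover have "move \<B> x b \<circ> inv (move \<B> x a) \<in> L_from \<Omega> \<B> x"
    using assms(1) moves unfolding is_perm_group_def by blast
  ultimately show "\<exists>g\<in>L_from \<Omega> \<B> x. g a = b" by blast
qed

locale supersimple_quadruple_system =
  fixes \<Omega> :: "'a set" and \<B> :: "'a set multiset"
  assumes supersimple: "supersimple \<B>"
    and line_subset: "B \<in># \<B> \<Longrightarrow> B \<subseteq> \<Omega>"
    and line_card: "B \<in># \<B> \<Longrightarrow> card B = 4"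
begin

abbreviation moves :: "('a \<Rightarrow> 'a) set" where
  "moves \<equiv> {move \<B> a b | a b. a \<in> \<Omega> \<and> b \<in> \<Omega>}"

lemma line_finite: "B \<in># \<B> \<Longrightarrow> finite B"
  by (rule card_ge_0_finite) (simp add: line_card)

lemma line_eq_if_three_common_points:
  assumes "B \<in># \<B>" "B' \<in># \<B>" "{a, b, x} \<subseteq> B \<inter> B'" "distinct [a, b, x]"
  shows "B = B'"
proof (rule ccontr)
  assume "B \<noteq> B'"
  then have "card (B \<inter> B') \<le> 2"
    using supersimple assms(1,2) unfolding supersimple_def by blast
  moreover have "finite (B \<inter> B')"
    using line_finite[OF assms(1)] by blast
  then have "card {a, b, x} \<le> card (B \<inter> B')"
    using assms(3) by (rule card_mono)
  ultimately show False
    using assms(4) by simp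
qed

lemma line_through_three_points:
  assumes "B \<in># \<B>" "{a, b, x} \<subseteq> B" "distinct [a, b, x]"
  obtains y where "B = {a, b, x, y}" "y \<notin> {a, b, x}"
proof -
  have "card (B - {a, b, x}) = Suc 0"
    using assms line_card[OF assms(1)] line_finite[OF assms(1)] by (simp add: card_Diff_subset)
  then obtain y where y: "B - {a, b, x} = {y}"
    unfolding card_1_singleton_iff by blast
  then have "B = {a, b, x, y}"
    using assms(2) by blast
  with y that show ?thesis by blast
qed

lemma move_on_line:
  assumes "B \<in># \<B>" "B = {a, b, x, y}" "distinct [a, b, x, y]"
  shows "move \<B> a b x = y"
proof -
  have "(THE z. \<exists>B' \<in># \<B>. B' = {a, b, x, z} \<and> z \<notin> {a, b, x}) = y"
  proof (rule the_equality)
    fix z assume "\<exists>B' \<in># \<B>. B' = {a, b, x, z} \<and> z \<notin> {a, b, x}"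
    then obtain B' where "B' \<in># \<B>" "B' = {a, b, x, z}" "z \<notin> {a, b, x}"
      by blast
    moreover have "B' = B"
      using line_eq_if_three_common_points[OF \<open>B' \<in># \<B>\<close> assms(1), of a b x]
        assms \<open>B' = {a, b, x, z}\<close> by auto
    ultimately show "z = y"
      using assms(2) by blast
  qed (use assms in auto)
  moreover have "\<exists>B'\<in>#\<B>. {a, b, x} \<subseteq> B'"
    using assms(1,2) by blast
  ultimately show ?thesis
    using assms(3) unfolding move_def by (simp only: distinct.simps list.set) auto
qed

lemma move_involution: "move \<B> a b (move \<B> a b x) = x"
proof (cases "a = b \<or> x = a \<or> x = b")
  case False
  show ?thesis
  proof (cases "\<exists>B\<in>#\<B>. {a, b, x} \<subseteq> B")
    case True
    then obtain B where B: "B \<in># \<B>" "{a, b, x} \<subseteq> B" by blast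
    moreover have "distinct [a, b, x]"
      using False by auto
    ultimately obtain y where "B = {a, b, x, y}" "y \<notin> {a, b, x}"
      by (blast elim: line_through_three_points)
    then have "move \<B> a b x = y" "move \<B> a b y = x"
      using False B(1) by (auto intro!: move_on_line simp: insert_commute)
    then show ?thesis by simp
  next
    case no_line: False
    then have "move \<B> a b x = x"
      using False unfolding move_def by auto
    then show ?thesis by simp
  qed
qed auto

lemma move_comp_self: "move \<B> a b \<circ> move \<B> a b = id"
  by (simp add: fun_eq_iff move_involution)

lemma move_permutes:
  assumes "a \<in> \<Omega>" "b \<in> \<Omega>"
  shows "move \<B> a b permutes \<Omega>"
proof -
  have "move \<B> a b x = x" if "x \<notin> \<Omega>" for x
    using that assms line_subset unfolding move_def by auto
  then show ?thesis
    unfolding permutes_def by (metis move_involution)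
qed

lemma move_seq_rev_comp: "move_seq \<B> (rev xs) \<circ> move_seq \<B> xs = id"
proof (induction xs rule: induct_list012)
  case (3 a b rest)
  have "move_seq \<B> (rev (a # b # rest)) \<circ> move_seq \<B> (a # b # rest)
      = move \<B> b a \<circ> (move_seq \<B> (rev (b # rest)) \<circ> move_seq \<B> (b # rest)) \<circ> move \<B> a b"
    using move_seq_append[of "rev (b # rest)" \<B> "[a]"] by (simp add: last_rev comp_assoc)
  also have "\<dots> = id"
    unfolding "3.IH"(2) move_commute[of \<B> b a] by (simp add: move_comp_self)
  finally show ?case .
qed auto

lemma inv_move_seq: "inv (move_seq \<B> xs) = move_seq \<B> (rev xs)"
  by (rule inv_unique_comp) (use move_seq_rev_comp[of xs] move_seq_rev_comp[of "rev xs"] in auto)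

lemma inv_in_L_all: "p \<in> L_all \<Omega> \<B> \<Longrightarrow> inv p \<in> L_all \<Omega> \<B>"
  unfolding L_all_def using inv_move_seq by fastforce

lemma moves_subset_L_from:
  assumes "is_perm_group \<Omega> (L_from \<Omega> \<B> x)"
  shows "moves \<subseteq> L_from \<Omega> \<B> x"
proof clarify
  fix a b assume "a \<in> \<Omega>" "b \<in> \<Omega>"
  then have "move_seq \<B> [x, a, b] \<in> L_from \<Omega> \<B> x" "move \<B> x a \<in> L_from \<Omega> \<B> x"
    using move_seq_in_L_from[of "[a, b]" \<Omega> \<B> x] move_seq_in_L_from[of "[a]" \<Omega> \<B> x] by auto
  then have "move_seq \<B> [x, a, b] \<circ> move \<B> x a \<in> L_from \<Omega> \<B> x"
    using assms unfolding is_perm_group_def by blast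
  moreover have "move_seq \<B> [x, a, b] \<circ> move \<B> x a = move \<B> a b"
    by (simp add: comp_assoc move_comp_self)
  ultimately show "move \<B> a b \<in> L_from \<Omega> \<B> x" by simp
qed

lemma is_perm_group_L_from_iff:
  assumes "x \<in> \<Omega>"
  shows "is_perm_group \<Omega> (L_from \<Omega> \<B> x)
    \<longleftrightarrow> L_from \<Omega> \<B> x = L_all \<Omega> \<B> \<and> L_all \<Omega> \<B> = gen_group moves"
proof
  assume group: "is_perm_group \<Omega> (L_from \<Omega> \<B> x)"
  have "gen_group moves \<subseteq> L_from \<Omega> \<B> x"
    using gen_group_subset_perm_group[OF group moves_subset_L_from[OF group]] .
  then show "L_from \<Omega> \<B> x = L_all \<Omega> \<B> \<and> L_all \<Omega> \<B> = gen_group moves"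
    using L_from_subset_L_all[OF assms] L_all_subset_gen_group by blast
next
  assume "L_from \<Omega> \<B> x = L_all \<Omega> \<B> \<and> L_all \<Omega> \<B> = gen_group moves"
  then show "is_perm_group \<Omega> (L_from \<Omega> \<B> x)"
    using is_perm_group_gen_group[of moves \<Omega>] move_permutes by auto
qed

lemma gen_group_subset_L_all:
  assumes "\<forall>y\<in>\<Omega>. L_all \<Omega> \<B> = L_from \<Omega> \<B> y" "x \<in> \<Omega>"
  shows "gen_group moves \<subseteq> L_all \<Omega> \<B>"
proof (rule gen_group_least)
  show "id \<in> L_all \<Omega> \<B>"
    using move_seq_in_L_all[of "[x]"] assms(2) by (simp add: id_def)
  show "p \<circ> q \<in> L_all \<Omega> \<B>" if p: "p \<in> L_all \<Omega> \<B>" and q: "q \<in> L_all \<Omega> \<B>" for p q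
  proof -
    obtain xs where "q = move_seq \<B> xs" "xs \<noteq> []" "set xs \<subseteq> \<Omega>"
      using q unfolding L_all_def by blast
    moreover from this have "last xs \<in> \<Omega>"
      by auto
    then have "p \<in> L_from \<Omega> \<B> (last xs)"
      using p assms(1) by blast
    ultimately show ?thesis
      using L_from_comp_L_all by blast
  qed
qed (use move_in_L_all inv_in_L_all in auto)

lemma L_from_eq_gen_group_iff:
  assumes "x \<in> \<Omega>"
  shows "L_from \<Omega> \<B> x = L_all \<Omega> \<B> \<and> L_all \<Omega> \<B> = gen_group moves
    \<longleftrightarrow> (\<forall>y\<in>\<Omega>. L_all \<Omega> \<B> = L_from \<Omega> \<B> y)"
proof
  assume eqs: "L_from \<Omega> \<B> x = L_all \<Omega> \<B> \<and> L_all \<Omega> \<B> = gen_group moves"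
  show "\<forall>y\<in>\<Omega>. L_all \<Omega> \<B> = L_from \<Omega> \<B> y"
  proof
    fix y assume y: "y \<in> \<Omega>"
    have "h \<in> L_from \<Omega> \<B> y" if "h \<in> L_all \<Omega> \<B>" for h
    proof -
      have "move \<B> y x \<in> gen_group moves"
        using y assms by (blast intro: gen_group.gen_gen)
      then have "h \<circ> move \<B> y x \<in> L_from \<Omega> \<B> x"
        using eqs that by (auto intro: gen_group.gen_comp)
      then have "h \<circ> move \<B> y x \<circ> move \<B> y x \<in> L_from \<Omega> \<B> y"
        by (rule L_from_comp_move[OF _ y assms])
      then show ?thesis
        by (simp add: comp_assoc move_comp_self)
    qed
    then show "L_all \<Omega> \<B> = L_from \<Omega> \<B> y"
      using L_from_subset_L_all[OF y] by blast
  qed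
next
  assume all: "\<forall>y\<in>\<Omega>. L_all \<Omega> \<B> = L_from \<Omega> \<B> y"
  then have "L_from \<Omega> \<B> x = L_all \<Omega> \<B>"
    using assms by simp
  moreover have "L_all \<Omega> \<B> = gen_group moves"
    by (rule subset_antisym[OF L_all_subset_gen_group gen_group_subset_L_all[OF all assms]])
  ultimately show "L_from \<Omega> \<B> x = L_all \<Omega> \<B> \<and> L_all \<Omega> \<B> = gen_group moves" ..
qed

end

theorem lemma2p6:
  fixes \<Omega> :: "'a set" and \<B> :: "'a set multiset" and n lam :: nat and inf_pt :: 'a
  assumes "design_2_4 n lam \<Omega> \<B>"
    and "supersimple \<B>"
    and "inf_pt \<in> \<Omega>"
  defines "G \<equiv> L_from \<Omega> \<B> inf_pt"
  shows "(is_perm_group \<Omega> G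
           \<longleftrightarrow> (G = L_all \<Omega> \<B> \<and> L_all \<Omega> \<B> = gen_group {move \<B> a b | a b. a \<in> \<Omega> \<and> b \<in> \<Omega>}))
       \<and> ((G = L_all \<Omega> \<B> \<and> L_all \<Omega> \<B> = gen_group {move \<B> a b | a b. a \<in> \<Omega> \<and> b \<in> \<Omega>})
           \<longleftrightarrow> (\<forall>x\<in>\<Omega>. L_all \<Omega> \<B> = L_from \<Omega> \<B> x))
       \<and> (is_perm_group \<Omega> G \<longrightarrow>
            transitive_on \<Omega> G \<and> stabilizer G inf_pt = pi_loops \<Omega> \<B> inf_pt)"
proof -
  interpret supersimple_quadruple_system \<Omega> \<B>
    using assms(1,2) unfolding design_2_4_def by unfold_locales auto
  show ?thesis
    unfolding G_def
  proof (intro conjI impI)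
    assume group: "is_perm_group \<Omega> (L_from \<Omega> \<B> inf_pt)"
    show "transitive_on \<Omega> (L_from \<Omega> \<B> inf_pt)"
      by (rule transitive_on_L_from[OF group assms(3)])
  qed (simp_all only: is_perm_group_L_from_iff[OF assms(3)] L_from_eq_gen_group_iff[OF assms(3)]
      stabilizer_L_from)
qed

end
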